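(* Let $d=2$, let $\mathcal S$ be the set of $2\times 2$ density operators, and let $\mathrm d\rho$ be a probability measure on $\mathcal S$. Put $\hat\rho=\mathbb E_\rho[\rho]$ and $p_\rho=\mathbb E_\rho\big[\sqrt{1-\mathrm{Tr}(\rho^2)}\big]$. Then $$\max_{\sigma\in\mathcal S}\mathbb E_\rho[F(\rho,\sigma)]=\frac12\left(1+\sqrt{2\big(p_\rho^2+\mathrm{Tr}(\hat\rho^2)\big)-1}\right),$$ and, whenever $2(p_\rho^2+\mathrm{Tr}(\hat\rho^2))-1>0$, the operator $$\sigma^\sharp=\tfrac12\mathbb 1+\sqrt{\frac{1}{2(p_\rho^2+\mathrm{Tr}(\hat\rho^2))-1}}\Big(\hat\rho-\tfrac12\mathbb 1\Big)$$ is a density operator attaining this maximum.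
   Context: The fidelity of $\rho,\sigma\in\mathcal S$ is $F(\rho,\sigma)=\big[\mathrm{Tr}\sqrt{\sqrt\rho\,\sigma\sqrt\rho}\big]^2$. $\mathbb E_\rho$ denotes expectation with respect to $\mathrm d\rho$; $\mathbb 1$ is the $2\times2$ identity. *)

theory Defs
  imports "HOL-Analysis.Analysis" "HOL-Probability.Probability"
begin

type_synonym cmat2 = "complex^2^2"

definition adj :: "cmat2 \<Rightarrow> cmat2" where
  "adj A = (\<chi> i j. cnj (A $ j $ i))"

definition hermitian :: "cmat2 \<Rightarrow> bool" where
  "hermitian A \<longleftrightarrow> adj A = A"

definition psd :: "cmat2 \<Rightarrow> bool" where
  "psd A \<longleftrightarrow> hermitian A \<and>
     (\<forall>x::complex^2. Im (\<Sum>i\<in>UNIV. cnj (x $ i) * (A *v x) $ i) = 0 \<and>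
                      Re (\<Sum>i\<in>UNIV. cnj (x $ i) * (A *v x) $ i) \<ge> 0)"

definition density_op :: "cmat2 \<Rightarrow> bool" where
  "density_op A \<longleftrightarrow> psd A \<and> trace A = 1"

definition msqrt :: "cmat2 \<Rightarrow> cmat2" where
  "msqrt A = (THE B. psd B \<and> B ** B = A)"

definition fidelity :: "cmat2 \<Rightarrow> cmat2 \<Rightarrow> real" where
  "fidelity \<rho> \<sigma> = (Re (trace (msqrt (msqrt \<rho> ** \<sigma> ** msqrt \<rho>))))\<^sup>2"

end

theory Submission
  imports Defs
begin

text \<open>A positive semidefinite \<open>X\<close> has the square root
  \<open>(X + \<surd>det X \<one>) / \<surd>(tr X + 2\<surd>det X)\<close>, which yields the closed form
  \<open>F(\<rho>,\<sigma>) = tr(\<rho>\<sigma>) + 2\<surd>(det \<rho> det \<sigma>) = tr(\<rho>\<sigma>) + \<surd>(1 - tr \<rho>\<^sup>2) \<surd>(1 - tr \<sigma>\<^sup>2)\<close>.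
  The expected fidelity is therefore the affine function \<open>tr(\<rho>hat \<sigma>) + p \<surd>(1 - tr \<sigma>\<^sup>2)\<close> of \<open>\<sigma>\<close>.
  Writing \<open>\<sigma>\<close> with diagonal \<open>a, c\<close> and off-diagonal entry \<open>b\<close>, the vector
  \<open>v = (a - c, 2 Re b, 2 Im b, \<surd>2 \<surd>(1 - tr \<sigma>\<^sup>2))\<close> is a unit vector and the objective equals
  \<open>(1 + u \<cdot> v) / 2\<close> for a vector \<open>u\<close> built from \<open>\<rho>hat\<close> and \<open>p\<close> with
  \<open>|u|\<^sup>2 = 2(p\<^sup>2 + tr \<rho>hat\<^sup>2) - 1\<close>. Cauchy--Schwarz gives the bound, and \<open>v = u / |u|\<close>,
  which is the state \<open>\<sigma>\<^sup>\<sharp>\<close>, attains it.\<close>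

subsection \<open>Hermitian matrices in coordinates\<close>

definition herm_mat :: "real \<Rightarrow> complex \<Rightarrow> real \<Rightarrow> cmat2" where
  "herm_mat a b c = (\<chi> i j. if i = 1 then (if j = 1 then complex_of_real a else b)
                               else (if j = 1 then cnj b else complex_of_real c))"

lemma herm_mat_nth [simp]:
  "herm_mat a b c $ 1 $ 1 = a" "herm_mat a b c $ 1 $ 2 = b"
  "herm_mat a b c $ 2 $ 1 = cnj b" "herm_mat a b c $ 2 $ 2 = c"
  by (simp_all add: herm_mat_def)

lemma herm_mat_eq_iff: "herm_mat a b c = herm_mat a' b' c' \<longleftrightarrow> a = a' \<and> b = b' \<and> c = c'"
  by (auto simp: vec_eq_iff forall_2)

lemma hermitian_iff_herm_mat:
  "hermitian A \<longleftrightarrow> A = herm_mat (Re (A$1$1)) (A$1$2) (Re (A$2$2))"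
  unfolding hermitian_def adj_def by (auto simp: vec_eq_iff forall_2 complex_eq_iff)

lemma hermitian_herm_mat [simp]: "hermitian (herm_mat a b c)"
  by (simp add: hermitian_iff_herm_mat)

lemma hermitianE:
  assumes "hermitian A"
  obtains a b c where "A = herm_mat a b c"
  using assms hermitian_iff_herm_mat by blast

lemma quadratic_form_herm_mat:
  "(\<Sum>i\<in>UNIV. cnj (x $ i) * (herm_mat a b c *v x) $ i)
     = complex_of_real (a * (cmod (x$1))\<^sup>2 + c * (cmod (x$2))\<^sup>2 + 2 * Re (cnj (x$1) * b * x$2))"
  by (simp add: sum_2 matrix_vector_mult_def complex_eq_iff cmod_power2, simp add: algebra_simps power2_eq_square)

lemma nonneg_hermitian_form_iff:
  fixes a c :: real and b :: complex
  shows "(\<forall>x y. 0 \<le> a * (cmod x)\<^sup>2 + c * (cmod y)\<^sup>2 + 2 * Re (cnj x * b * y))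
     \<longleftrightarrow> 0 \<le> a \<and> 0 \<le> c \<and> (cmod b)\<^sup>2 \<le> a * c"
    (is "(\<forall>x y. 0 \<le> ?Q x y) \<longleftrightarrow> _")
proof
  assume Q: "\<forall>x y. 0 \<le> ?Q x y"
  have a: "0 \<le> a" and c: "0 \<le> c" using Q[rule_format, of 1 0] Q[rule_format, of 0 1] by simp_all
  have "(cmod b)\<^sup>2 \<le> a * c"
  proof (cases "a = 0")
    case True
    have "0 \<le> ?Q (- of_real t * b) 1" for t using Q by blast
    then have "0 \<le> c - 2 * t * (cmod b)\<^sup>2" for t
      using True by (simp add: cmod_power2, simp add: power2_eq_square algebra_simps)
    from this[of "(c + 1) / (2 * (cmod b)\<^sup>2)"] show ?thesis
      using True by (cases "b = 0") simp_all
  next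
    case False
    have "0 \<le> ?Q (- b) a" using Q by blast
    then have "0 \<le> a * (a * c - (cmod b)\<^sup>2)"
      by (simp add: cmod_power2, simp add: power2_eq_square algebra_simps)
    then show ?thesis using a False by (simp add: zero_le_mult_iff)
  qed
  with a c show "0 \<le> a \<and> 0 \<le> c \<and> (cmod b)\<^sup>2 \<le> a * c" by blast
next
  assume abc: "0 \<le> a \<and> 0 \<le> c \<and> (cmod b)\<^sup>2 \<le> a * c"
  show "\<forall>x y. 0 \<le> ?Q x y"
  proof (intro allI)
    fix x y :: complex
    show "0 \<le> ?Q x y"
    proof (cases "a = 0")
      case True
      then show ?thesis using abc by simp
    next
      case False
      have "a * ?Q x y = (cmod (a * x + b * y))\<^sup>2 + (a * c - (cmod b)\<^sup>2) * (cmod y)\<^sup>2"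
        by (simp add: cmod_power2, simp add: power2_eq_square algebra_simps)
      also have "\<dots> \<ge> 0" using abc by simp
      finally show ?thesis using abc False by (simp add: zero_le_mult_iff)
    qed
  qed
qed

lemma psd_herm_mat_iff:
  "psd (herm_mat a b c) \<longleftrightarrow> 0 \<le> a \<and> 0 \<le> c \<and> (cmod b)\<^sup>2 \<le> a * c"
proof -
  have "psd (herm_mat a b c) \<longleftrightarrow>
      (\<forall>x::complex^2. 0 \<le> a * (cmod (x$1))\<^sup>2 + c * (cmod (x$2))\<^sup>2 + 2 * Re (cnj (x$1) * b * x$2))"
    unfolding psd_def quadratic_form_herm_mat by simp
  also have "\<dots> \<longleftrightarrow> (\<forall>x y. 0 \<le> a * (cmod x)\<^sup>2 + c * (cmod y)\<^sup>2 + 2 * Re (cnj x * b * y))"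
    unfolding forall_vector_2 by simp
  finally show ?thesis by (simp only: nonneg_hermitian_form_iff)
qed

lemma trace_herm_mat: "trace (herm_mat a b c) = of_real (a + c)"
  by (simp add: trace_def sum_2)

lemma det_herm_mat: "det (herm_mat a b c) = of_real (a * c - (cmod b)\<^sup>2)"
  by (simp add: det_2 complex_eq_iff cmod_power2, simp add: power2_eq_square)

lemma scaleR_herm_mat: "r *\<^sub>R herm_mat a b c = herm_mat (r * a) (of_real r * b) (r * c)"
  by (simp add: vec_eq_iff forall_2 complex_eq_iff)

lemma add_herm_mat: "herm_mat a b c + herm_mat a' b' c' = herm_mat (a + a') (b + b') (c + c')"
  by (simp add: vec_eq_iff forall_2)

lemma diff_herm_mat: "herm_mat a b c - herm_mat a' b' c' = herm_mat (a - a') (b - b') (c - c')"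
  by (simp add: vec_eq_iff forall_2)

lemma zero_herm_mat: "(0 :: cmat2) = herm_mat 0 0 0"
  by (simp add: vec_eq_iff forall_2)

lemma mat_1_herm_mat: "(mat 1 :: cmat2) = herm_mat 1 0 1"
  by (simp add: vec_eq_iff forall_2 mat_def)

lemma Re_trace_herm_mat_mult:
  "Re (trace (herm_mat a b c ** herm_mat a' b' c')) = a * a' + c * c' + 2 * (Re b * Re b' + Im b * Im b')"
  by (simp add: trace_def sum_2 matrix_matrix_mult_def)

lemma Re_trace_herm_mat_square:
  "Re (trace (herm_mat a b c ** herm_mat a b c)) = a\<^sup>2 + c\<^sup>2 + 2 * (cmod b)\<^sup>2"
  by (simp add: Re_trace_herm_mat_mult cmod_power2, simp add: power2_eq_square)

lemma hermitian_cayley_hamilton: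
  assumes "hermitian A"
  shows "A ** A = Re (trace A) *\<^sub>R A - Re (det A) *\<^sub>R mat 1"
proof -
  obtain a b c where A: "A = herm_mat a b c" using assms by (rule hermitianE)
  show ?thesis unfolding A
    by (simp add: vec_eq_iff forall_2 matrix_matrix_mult_def sum_2 trace_herm_mat det_herm_mat
        mat_def complex_eq_iff cmod_power2, simp add: power2_eq_square algebra_simps)
qed

lemma psdE:
  assumes "psd A"
  obtains a b c where "A = herm_mat a b c" "0 \<le> a" "0 \<le> c" "(cmod b)\<^sup>2 \<le> a * c"
proof -
  obtain a b c where A: "A = herm_mat a b c"
    using assms unfolding psd_def by (blast elim: hermitianE)
  with assms have "0 \<le> a \<and> 0 \<le> c \<and> (cmod b)\<^sup>2 \<le> a * c" by (simp add: psd_herm_mat_iff)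
  with A that show ?thesis by blast
qed

lemma density_opE:
  assumes "density_op A"
  obtains a b c where "A = herm_mat a b c" "0 \<le> a" "0 \<le> c" "(cmod b)\<^sup>2 \<le> a * c" "a + c = 1"
proof -
  obtain a b c where A: "A = herm_mat a b c" "0 \<le> a" "0 \<le> c" "(cmod b)\<^sup>2 \<le> a * c"
    using assms unfolding density_op_def by (blast elim: psdE)
  moreover have "a + c = 1" using assms A(1) by (simp add: density_op_def trace_herm_mat complex_eq_iff)
  ultimately show ?thesis using that by blast
qed

lemma psd_trace_nonneg: "psd A \<Longrightarrow> 0 \<le> Re (trace A)"
  by (elim psdE) (simp add: trace_herm_mat)

lemma psd_det_nonneg: "psd A \<Longrightarrow> 0 \<le> Re (det A)"
  by (elim psdE) (simp add: det_herm_mat)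

lemma psd_trace_eq_0:
  assumes "psd A" "Re (trace A) = 0"
  shows "A = 0"
proof -
  obtain a b c where A: "A = herm_mat a b c" "0 \<le> a" "0 \<le> c" "(cmod b)\<^sup>2 \<le> a * c"
    using assms(1) by (rule psdE)
  then have "a = 0" "c = 0" using assms(2) by (simp_all add: trace_herm_mat)
  with A have "b = 0" by simp
  with A \<open>a = 0\<close> \<open>c = 0\<close> show ?thesis by (simp add: vec_eq_iff forall_2)
qed

lemma hermitian_Re_det_square:
  "hermitian A \<Longrightarrow> Re (det (A ** A)) = (Re (det A))\<^sup>2"
  by (elim hermitianE) (simp add: det_mul det_herm_mat power2_eq_square flip: of_real_mult)

lemma hermitian_Re_trace_square:
  "hermitian A \<Longrightarrow> Re (trace (A ** A)) = (Re (trace A))\<^sup>2 - 2 * Re (det A)"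
  by (elim hermitianE) (simp add: Re_trace_herm_mat_square trace_herm_mat det_herm_mat power2_eq_square algebra_simps)


subsection \<open>Square roots\<close>

text \<open>Where the formula comes from: a positive semidefinite root \<open>B\<close> of \<open>X\<close> satisfies
  \<open>det B = \<surd>det X\<close> and \<open>(tr B)\<^sup>2 = tr X + 2 \<surd>det X\<close>, and Cayley--Hamilton gives
  \<open>(tr B) B = B\<^sup>2 + (det B) \<one> = X + \<surd>det X \<one>\<close>.\<close>
definition sqrt_psd :: "cmat2 \<Rightarrow> cmat2" where
  "sqrt_psd X = (1 / sqrt (Re (trace X) + 2 * sqrt (Re (det X)))) *\<^sub>R (X + sqrt (Re (det X)) *\<^sub>R mat 1)"

lemma sqrt_psd_0 [simp]: "sqrt_psd 0 = 0"
  by (simp add: sqrt_psd_def det_2 trace_def)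

lemma zero_matrix_mult_zero [simp]: "(0 :: cmat2) ** 0 = 0"
  by (simp add: matrix_matrix_mult_def vec_eq_iff)

lemma psd_root_Re_trace:
  assumes "psd B"
  shows "Re (trace B) = sqrt (Re (trace (B ** B)) + 2 * sqrt (Re (det (B ** B))))"
proof -
  have h: "hermitian B" using assms by (simp add: psd_def)
  have "sqrt (Re (det (B ** B))) = Re (det B)"
    using psd_det_nonneg[OF assms] by (simp add: hermitian_Re_det_square[OF h])
  then have "Re (trace (B ** B)) + 2 * sqrt (Re (det (B ** B))) = (Re (trace B))\<^sup>2"
    by (simp add: hermitian_Re_trace_square[OF h])
  then show ?thesis using psd_trace_nonneg[OF assms] by simp
qed

lemma sqrt_psd_square:
  assumes "psd B"
  shows "sqrt_psd (B ** B) = B"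
proof (cases "Re (trace B) = 0")
  case True
  then show ?thesis using psd_trace_eq_0[OF assms] by simp
next
  case False
  have h: "hermitian B" using assms by (simp add: psd_def)
  have "sqrt (Re (det (B ** B))) = Re (det B)"
    using psd_det_nonneg[OF assms] by (simp add: hermitian_Re_det_square[OF h])
  then have "sqrt_psd (B ** B) = (1 / Re (trace B)) *\<^sub>R (B ** B + Re (det B) *\<^sub>R mat 1)"
    unfolding sqrt_psd_def psd_root_Re_trace[OF assms, symmetric] by simp
  also have "\<dots> = B"
    using False by (simp add: hermitian_cayley_hamilton[OF h])
  finally show ?thesis .
qed

lemma sqrt_psd_trace_det:
  assumes "psd X" "0 < Re (trace X)"
  shows "psd (sqrt_psd X)"
    and "Re (trace (sqrt_psd X)) = sqrt (Re (trace X) + 2 * sqrt (Re (det X)))"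
    and "Re (det (sqrt_psd X)) = sqrt (Re (det X))"
proof -
  obtain a b c where X: "X = herm_mat a b c" "0 \<le> a" "0 \<le> c" "(cmod b)\<^sup>2 \<le> a * c"
    using assms(1) by (rule psdE)
  define s where "s = sqrt (a * c - (cmod b)\<^sup>2)"
  define t where "t = sqrt (a + c + 2 * s)"
  have s: "0 \<le> s" "s\<^sup>2 = a * c - (cmod b)\<^sup>2" using X by (simp_all add: s_def)
  have t: "0 < t" "t\<^sup>2 = a + c + 2 * s"
    using X s assms(2) by (simp_all add: t_def trace_herm_mat)
  have B: "sqrt_psd X = herm_mat ((a + s) / t) (of_real (1 / t) * b) ((c + s) / t)"
    unfolding sqrt_psd_def X(1) trace_herm_mat det_herm_mat mat_1_herm_mat
    by (simp add: scaleR_herm_mat add_herm_mat s_def t_def)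
  have det_ab: "(a + s) * (c + s) - (cmod b)\<^sup>2 = s * t\<^sup>2"
    using s(2) t(2) by (simp add: power2_eq_square algebra_simps)
  have "(cmod b)\<^sup>2 / t\<^sup>2 \<le> (a + s) * (c + s) / t\<^sup>2"
    using det_ab s(1) by (intro divide_right_mono) (simp_all add: algebra_simps)
  then show "psd (sqrt_psd X)"
    unfolding B using X(2,3) s(1) t(1) by (simp add: psd_herm_mat_iff norm_divide power_divide power2_eq_square)
  have "Re (trace (sqrt_psd X)) = (a + c + 2 * s) / t" by (simp add: B trace_herm_mat add_divide_distrib)
  also have "\<dots> = t" using t by (simp add: t(2)[symmetric] power2_eq_square)
  finally show "Re (trace (sqrt_psd X)) = sqrt (Re (trace X) + 2 * sqrt (Re (det X)))"
    by (simp add: t_def s_def X(1) trace_herm_mat det_herm_mat)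
  have "Re (det (sqrt_psd X)) = ((a + s) * (c + s) - (cmod b)\<^sup>2) / t\<^sup>2"
    using t(1) by (simp add: B det_herm_mat norm_divide power_divide diff_divide_distrib power2_eq_square)
  also have "\<dots> = s" using t(1) by (simp add: det_ab)
  finally show "Re (det (sqrt_psd X)) = sqrt (Re (det X))"
    by (simp add: s_def X(1) det_herm_mat)
qed

lemma sqrt_psd:
  assumes "psd X"
  shows "psd (sqrt_psd X)" and "sqrt_psd X ** sqrt_psd X = X"
proof -
  have "psd (sqrt_psd X) \<and> sqrt_psd X ** sqrt_psd X = X"
  proof (cases "Re (trace X) = 0")
    case True
    then have "X = 0" using psd_trace_eq_0[OF assms] by blast
    then show ?thesis using psd_herm_mat_iff[of 0 0 0] by (simp flip: zero_herm_mat)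
  next
    case False
    then have tr: "0 < Re (trace X)" using psd_trace_nonneg[OF assms] by simp
    define t where "t = sqrt (Re (trace X) + 2 * sqrt (Re (det X)))"
    have "0 < t" using tr psd_det_nonneg[OF assms] by (simp add: t_def add_pos_nonneg)
    note B = sqrt_psd_trace_det[OF assms tr, folded t_def]
    have "sqrt_psd X ** sqrt_psd X = t *\<^sub>R sqrt_psd X - sqrt (Re (det X)) *\<^sub>R mat 1"
      using hermitian_cayley_hamilton[of "sqrt_psd X"] B(1) unfolding psd_def B(2,3) by blast
    also have "\<dots> = X"
      using \<open>0 < t\<close> unfolding sqrt_psd_def t_def[symmetric] by simp
    finally show ?thesis using B(1) by blast
  qed
  then show "psd (sqrt_psd X)" "sqrt_psd X ** sqrt_psd X = X" by blast+
qed

lemma msqrt_eq_sqrt_psd: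
  assumes "psd X"
  shows "msqrt X = sqrt_psd X"
  unfolding msqrt_def
proof (rule the_equality)
  show "psd (sqrt_psd X) \<and> sqrt_psd X ** sqrt_psd X = X" using sqrt_psd[OF assms] by blast
  show "B = sqrt_psd X" if "psd B \<and> B ** B = X" for B
    by (metis that sqrt_psd_square)
qed

lemma Re_trace_msqrt:
  assumes "psd X"
  shows "Re (trace (msqrt X)) = sqrt (Re (trace X) + 2 * sqrt (Re (det X)))"
  using psd_root_Re_trace[of "msqrt X"] sqrt_psd[OF assms] by (simp add: msqrt_eq_sqrt_psd[OF assms])


subsection \<open>Fidelity of qubit states\<close>

lemma adj_matrix_mult: "adj (A ** B) = adj B ** adj A"
  by (simp add: adj_def vec_eq_iff forall_2 matrix_matrix_mult_def sum_2 mult.commute)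

lemma hermitian_inner_sym:
  assumes "hermitian R"
  shows "(\<Sum>i\<in>UNIV. cnj (x $ i) * (R *v z) $ i) = (\<Sum>i\<in>UNIV. cnj ((R *v x) $ i) * z $ i)"
proof -
  obtain a b c where R: "R = herm_mat a b c" using assms by (rule hermitianE)
  show ?thesis unfolding R by (simp add: sum_2 matrix_vector_mult_def algebra_simps)
qed

lemma psd_congruence:
  assumes "hermitian R" "psd S"
  shows "psd (R ** S ** R)"
  unfolding psd_def
proof (intro conjI allI)
  show "hermitian (R ** S ** R)"
    using assms unfolding hermitian_def psd_def by (simp add: adj_matrix_mult matrix_mul_assoc)
  fix x :: "complex^2"
  have "(\<Sum>i\<in>UNIV. cnj (x $ i) * ((R ** S ** R) *v x) $ i)
      = (\<Sum>i\<in>UNIV. cnj ((R *v x) $ i) * (S *v (R *v x)) $ i)"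
    unfolding matrix_vector_mul_assoc[symmetric] using hermitian_inner_sym[OF assms(1)] by simp
  then show "Im (\<Sum>i\<in>UNIV. cnj (x $ i) * ((R ** S ** R) *v x) $ i) = 0"
     "0 \<le> Re (\<Sum>i\<in>UNIV. cnj (x $ i) * ((R ** S ** R) *v x) $ i)"
    using assms(2) unfolding psd_def by simp_all
qed

lemma hermitian_Im_det: "hermitian A \<Longrightarrow> Im (det A) = 0"
  by (elim hermitianE) (simp add: det_herm_mat)

lemma fidelity_psd:
  assumes "psd \<rho>" "psd \<sigma>"
  shows "fidelity \<rho> \<sigma> = Re (trace (\<rho> ** \<sigma>)) + 2 * sqrt (Re (det \<rho>) * Re (det \<sigma>))"
proof -
  define R where "R = msqrt \<rho>"
  have R: "psd R" "R ** R = \<rho>"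
    using sqrt_psd[OF assms(1)] by (simp_all add: R_def msqrt_eq_sqrt_psd[OF assms(1)])
  define X where "X = R ** \<sigma> ** R"
  have X: "psd X" unfolding X_def using R(1) assms(2) by (intro psd_congruence) (simp_all add: psd_def)
  have "trace X = trace (\<rho> ** \<sigma>)"
    unfolding X_def by (metis R(2) matrix_mul_assoc trace_mul_sym)
  moreover have "det X = det \<rho> * det \<sigma>"
    unfolding X_def by (metis R(2) det_mul mult.commute mult.left_commute)
  then have "Re (det X) = Re (det \<rho>) * Re (det \<sigma>)"
    using assms by (simp add: psd_def hermitian_Im_det)
  moreover have "fidelity \<rho> \<sigma> = Re (trace X) + 2 * sqrt (Re (det X))"
    unfolding fidelity_def R_def[symmetric] X_def[symmetric] Re_trace_msqrt[OF X]
    using psd_trace_nonneg[OF X] psd_det_nonneg[OF X] by simp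
  ultimately show ?thesis by simp
qed

text \<open>\<open>1 - tr(\<rho>\<^sup>2)\<close> is the linear entropy of \<open>\<rho>\<close>; its root is the integrand of \<open>p\<close>.\<close>
definition sqrt_linear_entropy :: "cmat2 \<Rightarrow> real" where
  "sqrt_linear_entropy A = sqrt (1 - Re (trace (A ** A)))"

lemma sqrt_linear_entropy_density_op:
  assumes "density_op A"
  shows "sqrt_linear_entropy A = sqrt 2 * sqrt (Re (det A))"
proof -
  have "hermitian A" "Re (trace A) = 1" using assms by (simp_all add: density_op_def psd_def)
  then show ?thesis
    by (simp add: sqrt_linear_entropy_def hermitian_Re_trace_square flip: real_sqrt_mult)
qed

lemma fidelity_density_op:
  assumes "density_op \<rho>" "density_op \<sigma>"
  shows "fidelity \<rho> \<sigma> = Re (trace (\<rho> ** \<sigma>)) + sqrt_linear_entropy \<rho> * sqrt_linear_entropy \<sigma>"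
  using assms by (simp add: fidelity_psd density_op_def sqrt_linear_entropy_density_op real_sqrt_mult)


subsection \<open>Maximising the expected fidelity\<close>

lemma cauchy_schwarz_4:
  fixes u1 u2 u3 u4 v1 v2 v3 v4 :: real
  shows "u1 * v1 + u2 * v2 + u3 * v3 + u4 * v4
     \<le> sqrt (u1\<^sup>2 + u2\<^sup>2 + u3\<^sup>2 + u4\<^sup>2) * sqrt (v1\<^sup>2 + v2\<^sup>2 + v3\<^sup>2 + v4\<^sup>2)"
  using norm_cauchy_schwarz[of "((u1, u2), (u3, u4))" "((v1, v2), (v3, v4))"]
  by (simp add: norm_Pair add.assoc)

lemma density_op_unit_vector:
  assumes "density_op \<sigma>" "\<sigma> = herm_mat a b c"
  shows "(a - c)\<^sup>2 + (2 * Re b)\<^sup>2 + (2 * Im b)\<^sup>2 + (sqrt 2 * sqrt_linear_entropy \<sigma>)\<^sup>2 = 1"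
proof -
  have "a + c = 1" "0 \<le> a * c - (cmod b)\<^sup>2"
    using assms by (simp_all add: density_op_def psd_herm_mat_iff trace_herm_mat complex_eq_iff)
  then have "(sqrt 2 * sqrt_linear_entropy \<sigma>)\<^sup>2 = 4 * (a * c - (Re b)\<^sup>2 - (Im b)\<^sup>2)"
    using assms by (simp add: sqrt_linear_entropy_density_op det_herm_mat power_mult_distrib cmod_power2)
  moreover have "1 = (a + c)\<^sup>2" using \<open>a + c = 1\<close> by simp
  ultimately show ?thesis by (simp add: power2_eq_square algebra_simps)
qed

lemma affine_objective_eq_inner:
  assumes "a + c = 1" "a' + c' = 1"
  shows "2 * (Re (trace (herm_mat a b c ** herm_mat a' b' c')) + p * w) - 1
       = (a - c) * (a' - c') + (2 * Re b) * (2 * Re b') + (2 * Im b) * (2 * Im b') + (sqrt 2 * p) * (sqrt 2 * w)"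
proof -
  have "1 = (a + c) * (a' + c')" using assms by simp
  then show ?thesis by (simp add: Re_trace_herm_mat_mult algebra_simps)
qed

lemma affine_objective_bound_eq_norm:
  assumes "a + c = 1"
  shows "2 * (p\<^sup>2 + Re (trace (herm_mat a b c ** herm_mat a b c))) - 1
       = (a - c)\<^sup>2 + (2 * Re b)\<^sup>2 + (2 * Im b)\<^sup>2 + (sqrt 2 * p)\<^sup>2"
proof -
  have "1 = (a + c)\<^sup>2" using assms by simp
  then show ?thesis
    by (simp add: Re_trace_herm_mat_square cmod_power2 power_mult_distrib, simp add: power2_eq_square algebra_simps)
qed

lemma hermitian_trace_1E:
  assumes "hermitian H" "trace H = 1"
  obtains a b c where "H = herm_mat a b c" "a + c = 1"
proof -
  obtain a b c where H: "H = herm_mat a b c" using assms(1) by (rule hermitianE)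
  with assms(2) have "a + c = 1" by (simp add: trace_herm_mat complex_eq_iff)
  with H that show ?thesis by blast
qed

lemma affine_objective_le:
  assumes "hermitian H" "trace H = 1" "density_op \<sigma>"
  shows "Re (trace (H ** \<sigma>)) + p * sqrt_linear_entropy \<sigma>
       \<le> (1 + sqrt (2 * (p\<^sup>2 + Re (trace (H ** H))) - 1)) / 2"
proof -
  obtain a b c where H: "H = herm_mat a b c" "a + c = 1"
    using assms(1,2) by (rule hermitian_trace_1E)
  obtain a' b' c' where \<sigma>: "\<sigma> = herm_mat a' b' c'" "a' + c' = 1"
    using assms(3) by (rule density_opE)
  let ?w = "sqrt_linear_entropy \<sigma>"
  have "2 * (Re (trace (H ** \<sigma>)) + p * ?w) - 1
      = (a - c) * (a' - c') + (2 * Re b) * (2 * Re b') + (2 * Im b) * (2 * Im b') + (sqrt 2 * p) * (sqrt 2 * ?w)"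
    unfolding H(1) \<sigma>(1) using H(2) \<sigma>(2) by (rule affine_objective_eq_inner)
  also have "\<dots> \<le> sqrt ((a - c)\<^sup>2 + (2 * Re b)\<^sup>2 + (2 * Im b)\<^sup>2 + (sqrt 2 * p)\<^sup>2)
      * sqrt ((a' - c')\<^sup>2 + (2 * Re b')\<^sup>2 + (2 * Im b')\<^sup>2 + (sqrt 2 * ?w)\<^sup>2)"
    by (rule cauchy_schwarz_4)
  also have "\<dots> = sqrt (2 * (p\<^sup>2 + Re (trace (H ** H))) - 1)"
    using density_op_unit_vector[OF assms(3) \<sigma>(1)] affine_objective_bound_eq_norm[OF H(2)]
    by (simp add: H(1))
  finally show ?thesis by simp
qed

lemma density_op_scaled_state:
  fixes x \<tau> p :: real and b :: complex
  assumes "\<tau>\<^sup>2 * (x\<^sup>2 + 4 * (cmod b)\<^sup>2 + 2 * p\<^sup>2) = 1" "0 \<le> \<tau>" "0 \<le> p"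
  defines "\<sigma> \<equiv> herm_mat ((1 + \<tau> * x) / 2) (of_real \<tau> * b) ((1 - \<tau> * x) / 2)"
  shows "density_op \<sigma>" and "sqrt_linear_entropy \<sigma> = \<tau> * p"
proof -
  have det: "(1 + \<tau> * x) / 2 * ((1 - \<tau> * x) / 2) - (cmod (of_real \<tau> * b))\<^sup>2 = (\<tau> * p)\<^sup>2 / 2"
    using assms(1) by (simp add: norm_mult power_mult_distrib field_simps power2_eq_square)
  have "\<tau>\<^sup>2 * x\<^sup>2 \<le> 1"
    using assms(1) mult_left_mono[of "x\<^sup>2" "x\<^sup>2 + 4 * (cmod b)\<^sup>2 + 2 * p\<^sup>2" "\<tau>\<^sup>2"] by simp
  then have "\<bar>\<tau> * x\<bar> \<le> 1" by (simp add: abs_square_le_1 flip: power_mult_distrib)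
  moreover have "(cmod (of_real \<tau> * b))\<^sup>2 \<le> (1 + \<tau> * x) / 2 * ((1 - \<tau> * x) / 2)"
    using det zero_le_power2[of "\<tau> * p"] by linarith
  moreover have "trace \<sigma> = 1"
    unfolding \<sigma>_def trace_herm_mat by (simp add: add_divide_distrib[symmetric])
  ultimately show "density_op \<sigma>"
    by (simp add: \<sigma>_def density_op_def psd_herm_mat_iff abs_le_iff)
  have "sqrt_linear_entropy \<sigma> = sqrt (2 * ((1 + \<tau> * x) / 2 * ((1 - \<tau> * x) / 2) - (cmod (of_real \<tau> * b))\<^sup>2))"
    using \<open>density_op \<sigma>\<close> by (simp add: sqrt_linear_entropy_density_op \<sigma>_def det_herm_mat flip: real_sqrt_mult)
  also have "\<dots> = \<tau> * p"
    unfolding det using assms(2,3) by simp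
  finally show "sqrt_linear_entropy \<sigma> = \<tau> * p" .
qed

lemma affine_objective_maximizer:
  assumes "hermitian H" "trace H = 1" "0 \<le> p"
  defines "K \<equiv> 2 * (p\<^sup>2 + Re (trace (H ** H))) - 1"
  defines "\<sigma> \<equiv> (1/2) *\<^sub>R mat 1 + sqrt (1 / K) *\<^sub>R (H - (1/2) *\<^sub>R mat 1)"
  assumes "0 < K"
  shows "density_op \<sigma>" and "Re (trace (H ** \<sigma>)) + p * sqrt_linear_entropy \<sigma> = (1 + sqrt K) / 2"
proof -
  obtain a b c where H: "H = herm_mat a b c" "a + c = 1"
    using assms(1,2) by (rule hermitian_trace_1E)
  define x where "x = a - c"
  define \<tau> where "\<tau> = sqrt (1 / K)"
  have \<tau>: "0 \<le> \<tau>" "\<tau>\<^sup>2 * K = 1" "\<tau> * K = sqrt K"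
    using \<open>0 < K\<close> by (simp_all add: \<tau>_def) (simp add: real_sqrt_divide real_div_sqrt)
  have K: "K = x\<^sup>2 + 4 * (cmod b)\<^sup>2 + 2 * p\<^sup>2"
    using affine_objective_bound_eq_norm[OF H(2), of p b] unfolding K_def H(1) x_def
    by (simp add: power_mult_distrib cmod_power2)
  have \<sigma>_eq: "\<sigma> = herm_mat ((1 + \<tau> * x) / 2) (of_real \<tau> * b) ((1 - \<tau> * x) / 2)"
    using H(2) unfolding \<sigma>_def \<tau>_def[symmetric] H(1) x_def
    by (simp add: mat_1_herm_mat scaleR_herm_mat diff_herm_mat add_herm_mat)
       (simp add: herm_mat_eq_iff field_simps flip: H(2))
  note scaled = density_op_scaled_state[of \<tau> x b p, folded \<sigma>_eq]
  have "\<tau>\<^sup>2 * (x\<^sup>2 + 4 * (cmod b)\<^sup>2 + 2 * p\<^sup>2) = 1" using \<tau>(2) K by simp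
  with scaled \<tau>(1) assms(3)
  have "density_op \<sigma>" and w: "sqrt_linear_entropy \<sigma> = \<tau> * p" by simp_all
  then show "density_op \<sigma>" by blast
  have "(1 + \<tau> * x) / 2 + (1 - \<tau> * x) / 2 = 1" by (simp add: add_divide_distrib[symmetric])
  from affine_objective_eq_inner[OF H(2) this, of b "of_real \<tau> * b" p "\<tau> * p"]
  have "2 * (Re (trace (H ** \<sigma>)) + p * sqrt_linear_entropy \<sigma>) - 1
      = x * (\<tau> * x) + (2 * Re b) * (2 * \<tau> * Re b) + (2 * Im b) * (2 * \<tau> * Im b)
        + (sqrt 2 * p) * (sqrt 2 * (\<tau> * p))"
    unfolding w unfolding H(1) \<sigma>_eq x_def[symmetric]
    by (simp add: diff_divide_distrib[symmetric] algebra_simps)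
  also have "\<dots> = \<tau> * K"
    by (simp add: K cmod_power2, simp add: power2_eq_square algebra_simps)
  finally show "Re (trace (H ** \<sigma>)) + p * sqrt_linear_entropy \<sigma> = (1 + sqrt K) / 2"
    using \<tau>(3) by simp
qed

lemma affine_objective_attained:
  assumes "hermitian H" "trace H = 1" "0 \<le> p"
  shows "\<exists>\<sigma>. density_op \<sigma> \<and> Re (trace (H ** \<sigma>)) + p * sqrt_linear_entropy \<sigma>
           = (1 + sqrt (2 * (p\<^sup>2 + Re (trace (H ** H))) - 1)) / 2"
    (is "\<exists>\<sigma>. _ \<and> _ = (1 + sqrt ?K) / 2")
proof (cases "0 < ?K")
  case True
  then show ?thesis using affine_objective_maximizer[OF assms] by blast
next
  case False
  obtain a b c where H: "H = herm_mat a b c" "a + c = 1"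
    using assms(1,2) by (rule hermitian_trace_1E)
  have K: "?K = (a - c)\<^sup>2 + (2 * Re b)\<^sup>2 + (2 * Im b)\<^sup>2 + (sqrt 2 * p)\<^sup>2"
    unfolding H(1) using H(2) by (rule affine_objective_bound_eq_norm)
  have K0: "?K = 0" using False K by (smt (verit) zero_le_power2)
  with K have "a - c = 0" "Re b = 0" "Im b = 0" "p = 0"
    by (simp_all add: add_nonneg_eq_0_iff)
  text \<open>Then \<open>H = \<one>/2\<close> and \<open>p = 0\<close>, and every state attains the value \<open>1/2\<close>.\<close>
  define \<sigma> where "\<sigma> = herm_mat (1/2) 0 (1/2)"
  have "density_op \<sigma>"
    by (simp add: \<sigma>_def density_op_def psd_herm_mat_iff trace_herm_mat)
  moreover have "2 * (Re (trace (H ** \<sigma>)) + p * sqrt_linear_entropy \<sigma>) - 1 = 0"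
    unfolding H(1) \<sigma>_def using affine_objective_eq_inner[OF H(2), of "1/2" "1/2" b 0 p]
      \<open>a - c = 0\<close> \<open>Re b = 0\<close> \<open>Im b = 0\<close> \<open>p = 0\<close> by simp
  ultimately show ?thesis using K0 by (intro exI[of _ \<sigma>]) simp
qed


subsection \<open>Measurability\<close>

lemma psd_iff_entries:
  "psd A \<longleftrightarrow> Im (A$1$1) = 0 \<and> Im (A$2$2) = 0 \<and> A$2$1 = cnj (A$1$2)
     \<and> 0 \<le> Re (A$1$1) \<and> 0 \<le> Re (A$2$2) \<and> (cmod (A$1$2))\<^sup>2 \<le> Re (A$1$1) * Re (A$2$2)"
proof -
  have "hermitian A \<longleftrightarrow> Im (A$1$1) = 0 \<and> Im (A$2$2) = 0 \<and> A$2$1 = cnj (A$1$2)"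
    by (auto simp: hermitian_iff_herm_mat vec_eq_iff forall_2 complex_eq_iff)
  moreover have "psd A \<longleftrightarrow> hermitian A \<and> psd (herm_mat (Re (A$1$1)) (A$1$2) (Re (A$2$2)))"
    by (metis hermitian_iff_herm_mat psd_def)
  ultimately show ?thesis by (auto simp: psd_herm_mat_iff)
qed

lemma closed_psd: "closed {A. psd A}"
  unfolding psd_iff_entries
  by (intro closed_Collect_conj closed_Collect_eq closed_Collect_le continuous_intros)

lemma borel_measurable_trace [measurable]: "(trace :: cmat2 \<Rightarrow> complex) \<in> borel_measurable borel"
  by (intro borel_measurable_continuous_onI) (simp add: trace_def sum_2 continuous_intros)

lemma borel_measurable_det [measurable]: "(det :: cmat2 \<Rightarrow> complex) \<in> borel_measurable borel"
  by (intro borel_measurable_continuous_onI) (simp add: det_2 continuous_intros)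

lemma borel_measurable_matrix_mult [measurable]:
  fixes f g :: "'a \<Rightarrow> cmat2"
  assumes "f \<in> borel_measurable M" "g \<in> borel_measurable M"
  shows "(\<lambda>x. f x ** g x) \<in> borel_measurable M"
  using assms
  by (rule borel_measurable_continuous_Pair) (simp add: matrix_matrix_mult_def continuous_intros)

lemma msqrt_not_psd:
  assumes "\<not> psd A"
  shows "msqrt A = (THE B. False)"
proof -
  have I: "psd (mat 1 :: cmat2)" by (simp add: mat_1_herm_mat psd_herm_mat_iff)
  have "psd (B ** B)" if "psd B" for B
    using psd_congruence[OF _ I, of B] that by (simp add: psd_def[of B])
  with assms have "(\<lambda>B. psd B \<and> B ** B = A) = (\<lambda>B. False)" by auto
  then show ?thesis by (simp add: msqrt_def)
qed

lemma borel_measurable_msqrt [measurable]: "msqrt \<in> borel_measurable borel"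
proof -
  have "msqrt = (\<lambda>A. if psd A then sqrt_psd A else (THE B. False))"
    by (auto simp: msqrt_eq_sqrt_psd msqrt_not_psd)
  also have "\<dots> \<in> borel_measurable borel"
  proof (rule measurable_If)
    show "{A \<in> space borel. psd A} \<in> sets (borel :: cmat2 measure)"
      using borel_closed[OF closed_psd] by simp
  qed (simp_all add: sqrt_psd_def)
  finally show ?thesis .
qed

lemma borel_measurable_fidelity [measurable]: "(\<lambda>\<rho>. fidelity \<rho> \<sigma>) \<in> borel_measurable borel"
  unfolding fidelity_def by measurable

lemma borel_measurable_sqrt_linear_entropy [measurable]: "sqrt_linear_entropy \<in> borel_measurable borel"
  unfolding sqrt_linear_entropy_def[abs_def] by measurable


subsection \<open>Ensembles of qubit states\<close>

lemma norm_density_op_le_1: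
  assumes "density_op A"
  shows "norm A \<le> 1"
proof -
  obtain a b c where A: "A = herm_mat a b c" "0 \<le> a" "0 \<le> c" "(cmod b)\<^sup>2 \<le> a * c" "a + c = 1"
    using assms by (rule density_opE)
  have "(norm A)\<^sup>2 = a\<^sup>2 + c\<^sup>2 + 2 * (cmod b)\<^sup>2"
    by (simp add: A(1) norm_vec_def L2_set_def sum_2)
  also have "\<dots> \<le> (a + c)\<^sup>2" using A(4) by (simp add: power2_eq_square algebra_simps)
  finally show ?thesis using A(5) by (simp add: abs_square_le_1)
qed

lemma sqrt_linear_entropy_density_op_bounds:
  assumes "density_op A"
  shows "0 \<le> sqrt_linear_entropy A" and "sqrt_linear_entropy A \<le> 1"
proof -
  obtain a b c where A: "A = herm_mat a b c" "0 \<le> a" "0 \<le> c" "(cmod b)\<^sup>2 \<le> a * c" "a + c = 1"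
    using assms by (rule density_opE)
  have c: "c = 1 - a" using A(5) by simp
  have "1 - 4 * (a * c) = (a - c)\<^sup>2" unfolding c by (simp add: power2_eq_square algebra_simps)
  then have "a * c \<le> 1/4" using zero_le_power2[of "a - c"] by linarith
  then have "2 * (a * c - (cmod b)\<^sup>2) \<le> 1" using zero_le_power2[of "cmod b"] by argo
  with A assms show "0 \<le> sqrt_linear_entropy A" "sqrt_linear_entropy A \<le> 1"
    by (simp_all add: sqrt_linear_entropy_density_op det_herm_mat flip: real_sqrt_mult)
qed

lemma bounded_linear_adj: "bounded_linear adj"
  unfolding linear_conv_bounded_linear[symmetric]
  by (intro linearI) (simp_all add: adj_def vec_eq_iff)

lemma bounded_linear_trace: "bounded_linear (trace :: cmat2 \<Rightarrow> complex)"
  unfolding linear_conv_bounded_linear[symmetric]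
  by (intro linearI) (simp_all add: trace_def sum.distrib scaleR_sum_right)

lemma bounded_linear_Re_trace_mult: "bounded_linear (\<lambda>A::cmat2. Re (trace (A ** S)))"
  unfolding linear_conv_bounded_linear[symmetric]
  by (intro linearI) (simp_all add: trace_def sum_2 matrix_matrix_mult_def algebra_simps)

locale qubit_ensemble = prob_space M for M :: "cmat2 measure" +
  assumes sets_M: "sets M = sets borel"
    and AE_density_op: "AE \<rho> in M. density_op \<rho>"
begin

lemma borel_measurable_M: "f \<in> borel_measurable borel \<Longrightarrow> f \<in> borel_measurable M"
  using measurable_cong_sets[OF sets_M refl] by blast

lemma integrable_id: "integrable M (\<lambda>\<rho>. \<rho>)"
  using AE_density_op
  by (intro integrable_const_bound[where B = 1] borel_measurable_M)
     (auto elim: eventually_mono intro: norm_density_op_le_1)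

lemma AE_sqrt_linear_entropy_bounds: "AE \<rho> in M. 0 \<le> sqrt_linear_entropy \<rho> \<and> sqrt_linear_entropy \<rho> \<le> 1"
  using AE_density_op by eventually_elim (simp add: sqrt_linear_entropy_density_op_bounds)

lemma integrable_sqrt_linear_entropy: "integrable M sqrt_linear_entropy"
  using AE_sqrt_linear_entropy_bounds
  by (intro integrable_const_bound[where B = 1] borel_measurable_M borel_measurable_sqrt_linear_entropy)
     (auto elim: eventually_mono)

lemma integral_sqrt_linear_entropy_nonneg: "0 \<le> integral\<^sup>L M sqrt_linear_entropy"
  using AE_sqrt_linear_entropy_bounds by (intro integral_nonneg_AE) (auto elim: eventually_mono)

lemma hermitian_mean: "hermitian (integral\<^sup>L M (\<lambda>\<rho>. \<rho>))"
proof -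
  have "adj (integral\<^sup>L M (\<lambda>\<rho>. \<rho>)) = integral\<^sup>L M adj"
    by (rule integral_bounded_linear[OF bounded_linear_adj integrable_id, symmetric])
  also have "\<dots> = integral\<^sup>L M (\<lambda>\<rho>. \<rho>)"
    using AE_density_op
    by (intro integral_cong_AE borel_measurable_M borel_measurable_continuous_onI
        linear_continuous_on bounded_linear_adj)
       (auto elim: eventually_mono simp: density_op_def psd_def hermitian_def)
  finally show ?thesis unfolding hermitian_def .
qed

lemma trace_mean: "trace (integral\<^sup>L M (\<lambda>\<rho>. \<rho>)) = 1"
proof -
  have "trace (integral\<^sup>L M (\<lambda>\<rho>. \<rho>)) = integral\<^sup>L M trace"
    by (rule integral_bounded_linear[OF bounded_linear_trace integrable_id, symmetric])
  also have "\<dots> = integral\<^sup>L M (\<lambda>_. 1)"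
    using AE_density_op
    by (intro integral_cong_AE borel_measurable_M borel_measurable_trace)
       (auto elim: eventually_mono simp: density_op_def)
  also have "\<dots> = 1" by (simp add: prob_space)
  finally show ?thesis .
qed

lemma expected_fidelity:
  assumes "density_op \<sigma>"
  shows "integral\<^sup>L M (\<lambda>\<rho>. fidelity \<rho> \<sigma>)
       = Re (trace (integral\<^sup>L M (\<lambda>\<rho>. \<rho>) ** \<sigma>))
         + integral\<^sup>L M sqrt_linear_entropy * sqrt_linear_entropy \<sigma>"
proof -
  have "integral\<^sup>L M (\<lambda>\<rho>. fidelity \<rho> \<sigma>)
      = integral\<^sup>L M (\<lambda>\<rho>. Re (trace (\<rho> ** \<sigma>)) + sqrt_linear_entropy \<rho> * sqrt_linear_entropy \<sigma>)"
    using AE_density_op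
    by (intro integral_cong_AE borel_measurable_M)
       (auto elim: eventually_mono simp: fidelity_density_op assms)
  also have "\<dots> = integral\<^sup>L M (\<lambda>\<rho>. Re (trace (\<rho> ** \<sigma>)))
      + integral\<^sup>L M sqrt_linear_entropy * sqrt_linear_entropy \<sigma>"
    by (simp add: integrable_bounded_linear[OF bounded_linear_Re_trace_mult integrable_id]
        integrable_sqrt_linear_entropy)
  also have "integral\<^sup>L M (\<lambda>\<rho>. Re (trace (\<rho> ** \<sigma>))) = Re (trace (integral\<^sup>L M (\<lambda>\<rho>. \<rho>) ** \<sigma>))"
    by (rule integral_bounded_linear[OF bounded_linear_Re_trace_mult integrable_id])
  finally show ?thesis .
qed

end

theorem corollary1:
  fixes M :: "cmat2 measure"
  assumes "prob_space M"
    and "sets M = sets borel"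
    and "AE \<rho> in M. density_op \<rho>"
  defines "\<rho>hat \<equiv> integral\<^sup>L M (\<lambda>\<rho>. \<rho>)"
    and "p \<equiv> integral\<^sup>L M (\<lambda>\<rho>. sqrt (1 - Re (trace (\<rho> ** \<rho>))))"
  defines "V \<equiv> (1 + sqrt (2 * (p\<^sup>2 + Re (trace (\<rho>hat ** \<rho>hat))) - 1)) / 2"
  shows "(\<forall>\<sigma>. density_op \<sigma> \<longrightarrow> integral\<^sup>L M (\<lambda>\<rho>. fidelity \<rho> \<sigma>) \<le> V)
       \<and> (\<exists>\<sigma>. density_op \<sigma> \<and> integral\<^sup>L M (\<lambda>\<rho>. fidelity \<rho> \<sigma>) = V)
       \<and> (2 * (p\<^sup>2 + Re (trace (\<rho>hat ** \<rho>hat))) - 1 > 0 \<longrightarrow>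
            (let \<sigma>s = (1/2) *\<^sub>R mat 1
                     + sqrt (1 / (2 * (p\<^sup>2 + Re (trace (\<rho>hat ** \<rho>hat))) - 1))
                       *\<^sub>R (\<rho>hat - (1/2) *\<^sub>R mat 1)
             in density_op \<sigma>s \<and> integral\<^sup>L M (\<lambda>\<rho>. fidelity \<rho> \<sigma>s) = V))"
proof -
  interpret qubit_ensemble M
    using assms(1-3) by (simp add: qubit_ensemble_def qubit_ensemble_axioms_def)
  have p: "p = integral\<^sup>L M sqrt_linear_entropy"
    unfolding p_def sqrt_linear_entropy_def ..
  have H: "hermitian \<rho>hat" "trace \<rho>hat = 1" "0 \<le> p"
    unfolding \<rho>hat_def p using hermitian_mean trace_mean integral_sqrt_linear_entropy_nonneg by simp_all
  have E: "integral\<^sup>L M (\<lambda>\<rho>. fidelity \<rho> \<sigma>) = Re (trace (\<rho>hat ** \<sigma>)) + p * sqrt_linear_entropy \<sigma>"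
    if "density_op \<sigma>" for \<sigma>
    unfolding \<rho>hat_def p using expected_fidelity[OF that] .
  let ?K = "2 * (p\<^sup>2 + Re (trace (\<rho>hat ** \<rho>hat))) - 1"
  let ?\<sigma> = "(1/2) *\<^sub>R mat 1 + sqrt (1 / ?K) *\<^sub>R (\<rho>hat - (1/2) *\<^sub>R mat 1)"
  have "integral\<^sup>L M (\<lambda>\<rho>. fidelity \<rho> \<sigma>) \<le> V" if "density_op \<sigma>" for \<sigma>
    unfolding E[OF that] V_def using affine_objective_le[OF H(1,2) that] .
  moreover have "\<exists>\<sigma>. density_op \<sigma> \<and> integral\<^sup>L M (\<lambda>\<rho>. fidelity \<rho> \<sigma>) = V"
    using affine_objective_attained[OF H] E unfolding V_def by metis
  moreover have "density_op ?\<sigma> \<and> integral\<^sup>L M (\<lambda>\<rho>. fidelity \<rho> ?\<sigma>) = V" if "0 < ?K"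
    using affine_objective_maximizer[OF H that] E unfolding V_def by simp
  ultimately show ?thesis unfolding Let_def by blast
qed

end
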